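(* Assume (A1) differentiability, (A2) convexity, (A3) $\mu$-strong convexity of $f$, (A4) interpolation and (SS) Star Similarity with constant $\delta_*>0$ (with respect to the point $x_*$, which is the minimizer of $f$ and satisfies (A4)). If the stepsize satisfies $0<\gamma\le\frac{\mu}{2\delta_*^2}$, then the iterates of SPPM satisfy, for every $k\ge0$, $$\mathbb{E}\big[\|x_k-x_*\|^2\big]\le\left(1-\min\Big(\frac{\gamma\mu}{4},\frac12\Big)\right)^k\|x_0-x_*\|^2 .$$
   Context: Setting: $\mathcal{D}$ is a probability distribution over samples $\xi$; for each $\xi$, $f_\xi:\mathbb{R}^d\to\mathbb{R}$; $f(x)=\mathbb{E}_{\xi\sim\mathcal{D}}[f_\xi(x)]$, with $\nabla f(x)=\mathbb{E}[\nabla f_\xi(x)]$. Assumptions: (A1) $f_\xi$ differentiable for $\mathcal{D}$-a.e. $\xi$; (A2) $f_\xi$ convex for $\mathcal{D}$-a.e. $\xi$; (A3) $f(x)\ge f(y)+\langle\nabla f(y),x-y\rangle+\frac\mu2\|x-y\|^2$ for all $x,y$; (A4) (interpolation) there exists $x_*$ with $\nabla f_\xi(x_* )=0$ for $\mathcal{D}$-a.e. $\xi$; (SS) (Star Similarity) there exist a minimizer $x_*$ of $f$ and $\delta_*>0$ with $\mathbb{E}_{\xi\sim\mathcal{D}}\big[\|\nabla f_\xi(x)-\nabla f(x)-\nabla f_\xi(x_* )\|^2\big]\le\delta_*^2\|x-x_*\|^2$ for all $x\in\mathbb{R}^d$. SPPM: given $\gamma>0$, $x_0\in\mathbb{R}^d$,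 and i.i.d. $\xi_0,\xi_1,\dots\sim\mathcal{D}$, set $x_{k+1}=\arg\min_{z}\{f_{\xi_k}(z)+\frac{1}{2\gamma}\|z-x_k\|^2\}$. *)

theory Defs
  imports "HOL-Analysis.Analysis" "HOL-Probability.Probability"
begin

text \<open>Proximal step: the (unique, for convex g and gamma > 0) minimizer of
  z \<mapsto> g z + 1/(2 gamma) * norm (z - x)^2.\<close>
definition prox_step :: "real \<Rightarrow> ('a::real_normed_vector \<Rightarrow> real) \<Rightarrow> 'a \<Rightarrow> 'a" where
  "prox_step \<gamma> g x =
     (THE z. \<forall>w. g z + (norm (z - x))\<^sup>2 / (2 * \<gamma>) \<le> g w + (norm (w - x))\<^sup>2 / (2 * \<gamma>))"

fun sppm :: "real \<Rightarrow> ('b \<Rightarrow> 'a::real_normed_vector \<Rightarrow> real) \<Rightarrow> 'a \<Rightarrow> (nat \<Rightarrow> 'b) \<Rightarrow> nat \<Rightarrow> 'a" where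
  "sppm \<gamma> F x0 \<omega> 0 = x0"
| "sppm \<gamma> F x0 \<omega> (Suc k) = prox_step \<gamma> (F (\<omega> k)) (sppm \<gamma> F x0 \<omega> k)"

end

(* One SPPM step from x is analysed through the three-point inequality of the proximal objective,
   compared with the stationary point xs and linearised at the mean m of the next iterate. In
   expectation, strong convexity of f contributes the factor 1 + gamma mu / 2 in front of
   norm (m - xs)^2, while the deviation of the sample gradients at m from their mean, bounded by
   star similarity, is absorbed by the variance of the next iterate because gamma <= mu / (2 delta^2).
   Splitting norm (x - xs)^2 with Young's inequality then gives
   E norm (x_(k+1) - xs)^2 <= norm (x_k - xs)^2 / (1 + gamma mu / 2); the samples are independent,
   so the bound iterates over the product measure, and 1 / (1 + s) <= 1 - min (s / 2) (1 / 2). *)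

theory Submission
  imports Defs
begin

lemma power2_norm_add:
  fixes p q :: "'a::real_inner"
  shows "(norm (p + q))\<^sup>2 = (norm p)\<^sup>2 + 2 * (p \<bullet> q) + (norm q)\<^sup>2"
  by (simp add: power2_norm_eq_inner inner_add_left inner_add_right inner_commute)

lemma Young_inner:
  fixes p q :: "'a::real_inner"
  assumes "c > 0"
  shows "2 * (p \<bullet> q) \<le> (norm p)\<^sup>2 / c + c * (norm q)\<^sup>2"
proof -
  have "0 \<le> (norm (p - c *\<^sub>R q))\<^sup>2 / c" using assms by simp
  also have "\<dots> = (norm p)\<^sup>2 / c - 2 * (p \<bullet> q) + c * (norm q)\<^sup>2"
    using power2_norm_add[of p "- c *\<^sub>R q"] assms
    by (simp add: field_simps power2_eq_square power_mult_distrib)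
  finally show ?thesis by simp
qed

lemma contraction_from_power2_norm_add_bound:
  fixes a b :: "'a::real_inner"
  assumes "s > 0" and bound: "(1 + s) * (norm b)\<^sup>2 + (norm a)\<^sup>2 + V \<le> (norm (a + b))\<^sup>2"
  shows "(1 + s) * (V + (norm b)\<^sup>2) \<le> (norm (a + b))\<^sup>2"
proof -
  have "2 * (a \<bullet> b) \<le> (norm a)\<^sup>2 / s + s * (norm b)\<^sup>2"
    by (rule Young_inner[OF \<open>s > 0\<close>])
  then have "s * (norm (a + b))\<^sup>2 \<le> (1 + s) * (norm a)\<^sup>2 + s * (1 + s) * (norm b)\<^sup>2"
    using \<open>s > 0\<close> by (simp add: power2_norm_add field_simps)
  moreover have "(1 + s) * ((1 + s) * (norm b)\<^sup>2 + (norm a)\<^sup>2 + V) \<le> (1 + s) * (norm (a + b))\<^sup>2"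
    using bound \<open>s > 0\<close> by (intro mult_left_mono) auto
  ultimately show ?thesis
    by (simp add: algebra_simps)
qed

lemma one_div_one_plus_le:
  fixes s :: real
  assumes "s > 0"
  shows "1 / (1 + s) \<le> 1 - min (s / 2) (1 / 2)"
proof (cases "s \<le> 1")
  case True
  have "1 \<le> (1 - s / 2) * (1 + s)"
    using True assms by (simp add: algebra_simps power2_eq_square)
  then show ?thesis
    using True assms by (simp add: min_def field_simps)
qed (simp add: min_def field_simps)

lemma convex_on_above_derivative:
  fixes g :: "'a::real_normed_vector \<Rightarrow> real"
  assumes convex: "convex_on UNIV g" and deriv: "(g has_derivative g') (at y)"
  shows "g y + g' (z - y) \<le> g z"
proof -
  define h where "h t = g (y + t *\<^sub>R (z - y))" for t :: real
  have "((\<lambda>t. y + t *\<^sub>R (z - y)) has_derivative (\<lambda>t. t *\<^sub>R (z - y))) (at 0)"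
    by (auto intro!: derivative_eq_intros)
  with deriv have "(h has_derivative (\<lambda>t. g' (t *\<^sub>R (z - y)))) (at 0)"
    unfolding h_def using has_derivative_compose by fastforce
  moreover have "(\<lambda>t. g' (t *\<^sub>R (z - y))) = (\<lambda>t. g' (z - y) * t)"
    using linear_scale[OF has_derivative_linear[OF deriv]] by auto
  ultimately have "(h has_real_derivative g' (z - y)) (at 0 within {0<..})"
    by (simp add: has_field_derivative_def has_derivative_at_withinI)
  then have "((\<lambda>t. (h t - h 0) / t) \<longlongrightarrow> g' (z - y)) (at_right 0)"
    by (simp add: has_field_derivative_iff)
  moreover have "\<forall>\<^sub>F t in at_right 0. (h t - h 0) / t \<le> g z - g y"
    using eventually_at_right_real[OF zero_less_one]
  proof eventually_elim
    case (elim t)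
    have "h t = g ((1 - t) *\<^sub>R y + t *\<^sub>R z)"
      by (simp add: h_def algebra_simps)
    also have "\<dots> \<le> (1 - t) * g y + t * g z"
      using elim by (intro convex_onD[OF convex]) auto
    finally have "h t - h 0 \<le> (g z - g y) * t"
      by (simp add: h_def algebra_simps)
    then show ?case
      using elim by (simp add: pos_divide_le_eq)
  qed
  ultimately have "g' (z - y) \<le> g z - g y"
    by (rule tendsto_upperbound) simp
  then show ?thesis by simp
qed

lemma prox_three_point:
  fixes g :: "'a::real_inner \<Rightarrow> real"
  assumes convex: "convex_on UNIV g" and "\<gamma> > 0"
    and minimal: "\<And>w. g z + (norm (z - x))\<^sup>2 / (2 * \<gamma>) \<le> g w + (norm (w - x))\<^sup>2 / (2 * \<gamma>)"
  shows "g z + (norm (z - x))\<^sup>2 / (2 * \<gamma>) + (norm (w - z))\<^sup>2 / (2 * \<gamma>)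
           \<le> g w + (norm (w - x))\<^sup>2 / (2 * \<gamma>)"
proof -
  define a where "a = (z - x) \<bullet> (w - z)"
  define b where "b = (norm (w - z))\<^sup>2"
  have expand: "(norm (z - x + t *\<^sub>R (w - z)))\<^sup>2 = (norm (z - x))\<^sup>2 + 2 * t * a + t\<^sup>2 * b" for t
    by (simp add: power2_norm_add a_def b_def power_mult_distrib)
  \<comment> \<open>Minimality along the segment from z to w, divided by t, leaves a term of order t.\<close>
  define c where "c = g w - g z + a / \<gamma>"
  have "\<forall>\<^sub>F t in at_right 0. 0 \<le> c + t * (b / (2 * \<gamma>))"
    using eventually_at_right_real[OF zero_less_one]
  proof eventually_elim
    case (elim t)
    define p where "p = (1 - t) *\<^sub>R z + t *\<^sub>R w"
    have "p - x = z - x + t *\<^sub>R (w - z)"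
      by (simp add: p_def algebra_simps)
    then have "(norm (p - x))\<^sup>2 = (norm (z - x))\<^sup>2 + 2 * t * a + t\<^sup>2 * b"
      by (simp only: expand)
    then have "g z + (norm (z - x))\<^sup>2 / (2 * \<gamma>)
               \<le> g p + ((norm (z - x))\<^sup>2 + 2 * t * a + t\<^sup>2 * b) / (2 * \<gamma>)"
      using minimal[of p] by simp
    moreover have "g p \<le> (1 - t) * g z + t * g w"
      using elim unfolding p_def by (intro convex_onD[OF convex]) auto
    ultimately have "0 \<le> t * (g w - g z) + (2 * t * a + t\<^sup>2 * b) / (2 * \<gamma>)"
      by (simp add: add_divide_distrib algebra_simps)
    also have "\<dots> = t * (c + t * (b / (2 * \<gamma>)))"
      using \<open>\<gamma> > 0\<close> by (simp add: c_def field_simps power2_eq_square)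
    finally show ?case
      using elim by (simp add: zero_le_mult_iff)
  qed
  moreover have "((\<lambda>t. c + t * (b / (2 * \<gamma>))) \<longlongrightarrow> c) (at_right 0)"
    using \<open>\<gamma> > 0\<close> by (auto intro!: tendsto_eq_intros)
  ultimately have "0 \<le> c"
    by (intro tendsto_lowerbound) auto
  moreover have "(norm (w - x))\<^sup>2 / (2 * \<gamma>) = (norm (z - x))\<^sup>2 / (2 * \<gamma>) + a / \<gamma> + b / (2 * \<gamma>)"
    using expand[of 1] \<open>\<gamma> > 0\<close> by (simp add: field_simps)
  ultimately show ?thesis
    by (simp add: b_def c_def)
qed

lemma prox_objective_has_minimizer:
  fixes g :: "'a::euclidean_space \<Rightarrow> real"
  assumes convex: "convex_on UNIV g" and grad: "\<And>y. (g has_derivative (\<lambda>h. Gr y \<bullet> h)) (at y)"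
    and "\<gamma> > 0"
  obtains z where "\<And>w. g z + (norm (z - x))\<^sup>2 / (2 * \<gamma>) \<le> g w + (norm (w - x))\<^sup>2 / (2 * \<gamma>)"
proof -
  define \<Phi> where "\<Phi> w = g w + (norm (w - x))\<^sup>2 / (2 * \<gamma>)" for w
  have "continuous_on UNIV g"
    using grad by (intro continuous_at_imp_continuous_on) (auto intro: has_derivative_continuous)
  then have "continuous_on UNIV \<Phi>"
    unfolding \<Phi>_def using \<open>\<gamma> > 0\<close> by (intro continuous_intros) auto
  \<comment> \<open>Outside this ball the quadratic term beats the tangent plane at x, so \<Phi> exceeds \<Phi> x.\<close>
  define r where "r = 2 * \<gamma> * norm (Gr x)"
  have "cball x r \<noteq> {}"
    using \<open>\<gamma> > 0\<close> by (simp add: r_def mult_less_0_iff)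
  then obtain z where z: "z \<in> cball x r" "\<And>w. w \<in> cball x r \<Longrightarrow> \<Phi> z \<le> \<Phi> w"
    using continuous_attains_inf[OF compact_cball _ continuous_on_subset[OF \<open>continuous_on UNIV \<Phi>\<close>]]
    by blast
  have "\<Phi> z \<le> \<Phi> w" for w
  proof (cases "w \<in> cball x r")
    case False
    then have far: "r < norm (w - x)"
      by (simp add: dist_norm norm_minus_commute)
    have "- (norm (Gr x) * norm (w - x)) \<le> Gr x \<bullet> (w - x)"
      using Cauchy_Schwarz_ineq2[of "Gr x" "w - x"] by (simp add: abs_le_iff)
    moreover have "norm (Gr x) * norm (w - x) \<le> (norm (w - x))\<^sup>2 / (2 * \<gamma>)"
    proof -
      have "2 * \<gamma> * norm (Gr x) * norm (w - x) \<le> norm (w - x) * norm (w - x)"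
        using far by (intro mult_right_mono) (auto simp: r_def)
      then show ?thesis
        using \<open>\<gamma> > 0\<close> by (simp add: field_simps power2_eq_square)
    qed
    moreover have "g x + Gr x \<bullet> (w - x) \<le> g w"
      by (rule convex_on_above_derivative[OF convex grad])
    ultimately have "\<Phi> x \<le> \<Phi> w"
      by (simp add: \<Phi>_def)
    moreover have "\<Phi> z \<le> \<Phi> x"
      using z(2)[of x] \<open>\<gamma> > 0\<close> by (simp add: r_def)
    ultimately show ?thesis by simp
  qed (use z in simp)
  then show ?thesis
    using that unfolding \<Phi>_def by blast
qed

lemma prox_step_minimizes:
  fixes g :: "'a::euclidean_space \<Rightarrow> real"
  assumes convex: "convex_on UNIV g" and grad: "\<And>y. (g has_derivative (\<lambda>h. Gr y \<bullet> h)) (at y)"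
    and "\<gamma> > 0"
  shows "g (prox_step \<gamma> g x) + (norm (prox_step \<gamma> g x - x))\<^sup>2 / (2 * \<gamma>)
           \<le> g w + (norm (w - x))\<^sup>2 / (2 * \<gamma>)"
proof -
  obtain z where z: "\<And>w. g z + (norm (z - x))\<^sup>2 / (2 * \<gamma>) \<le> g w + (norm (w - x))\<^sup>2 / (2 * \<gamma>)"
    using prox_objective_has_minimizer[OF convex grad \<open>\<gamma> > 0\<close>] by blast
  have "prox_step \<gamma> g x = z"
    unfolding prox_step_def
  proof (rule the_equality)
    fix z' assume z': "\<forall>w. g z' + (norm (z' - x))\<^sup>2 / (2 * \<gamma>) \<le> g w + (norm (w - x))\<^sup>2 / (2 * \<gamma>)"
    have "g z' + (norm (z' - x))\<^sup>2 / (2 * \<gamma>) + (norm (z - z'))\<^sup>2 / (2 * \<gamma>)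
          \<le> g z + (norm (z - x))\<^sup>2 / (2 * \<gamma>)"
      using z' by (intro prox_three_point[OF convex \<open>\<gamma> > 0\<close>]) auto
    with z[of z'] \<open>\<gamma> > 0\<close> show "z' = z"
      by (smt (verit) divide_pos_pos zero_less_power2 zero_less_norm_iff eq_iff_diff_eq_0)
  qed (use z in blast)
  with z show ?thesis by simp
qed

lemma prox_step_three_point:
  fixes g :: "'a::euclidean_space \<Rightarrow> real"
  assumes convex: "convex_on UNIV g" and grad: "\<And>y. (g has_derivative (\<lambda>h. Gr y \<bullet> h)) (at y)"
    and "\<gamma> > 0"
  shows "g (prox_step \<gamma> g x) + (norm (prox_step \<gamma> g x - x))\<^sup>2 / (2 * \<gamma>)
           + (norm (w - prox_step \<gamma> g x))\<^sup>2 / (2 * \<gamma>) \<le> g w + (norm (w - x))\<^sup>2 / (2 * \<gamma>)"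
  by (rule prox_three_point[OF convex \<open>\<gamma> > 0\<close> prox_step_minimizes[OF convex grad \<open>\<gamma> > 0\<close>]])

lemma prox_step_toward_stationary_point:
  fixes g :: "'a::euclidean_space \<Rightarrow> real"
  assumes convex: "convex_on UNIV g" and grad: "\<And>y. (g has_derivative (\<lambda>h. Gr y \<bullet> h)) (at y)"
    and "\<gamma> > 0"
  shows "2 * \<gamma> * g (prox_step \<gamma> g x) + (norm (prox_step \<gamma> g x - x))\<^sup>2 + (norm (prox_step \<gamma> g x - xs))\<^sup>2
           \<le> 2 * \<gamma> * g xs + (norm (x - xs))\<^sup>2"
proof -
  have "2 * \<gamma> * (g (prox_step \<gamma> g x) + (norm (prox_step \<gamma> g x - x))\<^sup>2 / (2 * \<gamma>)
          + (norm (xs - prox_step \<gamma> g x))\<^sup>2 / (2 * \<gamma>))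
        \<le> 2 * \<gamma> * (g xs + (norm (xs - x))\<^sup>2 / (2 * \<gamma>))"
    using prox_step_three_point[OF convex grad \<open>\<gamma> > 0\<close>] \<open>\<gamma> > 0\<close> by (intro mult_left_mono) auto
  then show ?thesis
    using \<open>\<gamma> > 0\<close> by (simp add: algebra_simps norm_minus_commute)
qed

lemma prox_step_dist_le:
  fixes g :: "'a::euclidean_space \<Rightarrow> real"
  assumes convex: "convex_on UNIV g" and grad: "\<And>y. (g has_derivative (\<lambda>h. Gr y \<bullet> h)) (at y)"
    and "\<gamma> > 0" and "Gr xs = 0"
  shows "(norm (prox_step \<gamma> g x - x))\<^sup>2 + (norm (prox_step \<gamma> g x - xs))\<^sup>2 \<le> (norm (x - xs))\<^sup>2"
proof -
  have "g xs \<le> g (prox_step \<gamma> g x)"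
    using convex_on_above_derivative[OF convex grad] \<open>Gr xs = 0\<close> by (metis add.right_neutral inner_zero_left)
  then have "2 * \<gamma> * g xs \<le> 2 * \<gamma> * g (prox_step \<gamma> g x)"
    using \<open>\<gamma> > 0\<close> by simp
  then show ?thesis
    using prox_step_toward_stationary_point[OF convex grad \<open>\<gamma> > 0\<close>, of x xs] by linarith
qed

text \<open>Applied below with y the mean of the next SPPM iterate and v the mean gradient at y, so that
  the error term is the gradient noise controlled by star similarity.\<close>
lemma prox_step_linearized_ineq:
  fixes g :: "'a::euclidean_space \<Rightarrow> real" and x :: 'a
  assumes convex: "convex_on UNIV g" and grad: "\<And>y. (g has_derivative (\<lambda>h. Gr y \<bullet> h)) (at y)"
    and "\<gamma> > 0" and "c > 0" and "\<gamma> * c \<le> 1"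
  defines "p \<equiv> prox_step \<gamma> g x"
  shows "(norm (p - x))\<^sup>2 + (norm (p - xs))\<^sup>2 + 2 * \<gamma> * (g y - g xs) + 2 * \<gamma> * (v \<bullet> (p - y))
           \<le> (norm (x - xs))\<^sup>2 + (norm (p - y))\<^sup>2 + \<gamma> / c * (norm (Gr y - v))\<^sup>2"
proof -
  have tangent: "g y + Gr y \<bullet> (p - y) \<le> g p"
    by (rule convex_on_above_derivative[OF convex grad])
  have "2 * ((v - Gr y) \<bullet> (p - y)) \<le> (norm (v - Gr y))\<^sup>2 / c + c * (norm (p - y))\<^sup>2"
    by (rule Young_inner[OF \<open>c > 0\<close>])
  then have "2 * \<gamma> * ((v - Gr y) \<bullet> (p - y)) \<le> \<gamma> / c * (norm (Gr y - v))\<^sup>2 + \<gamma> * c * (norm (p - y))\<^sup>2"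
    using \<open>\<gamma> > 0\<close> mult_left_mono[of _ _ \<gamma>] by (fastforce simp: norm_minus_commute algebra_simps)
  also have "\<gamma> * c * (norm (p - y))\<^sup>2 \<le> (norm (p - y))\<^sup>2"
    using \<open>\<gamma> * c \<le> 1\<close> \<open>\<gamma> > 0\<close> \<open>c > 0\<close> by (intro mult_left_le_one_le) auto
  finally have "2 * \<gamma> * ((v - Gr y) \<bullet> (p - y)) \<le> \<gamma> / c * (norm (Gr y - v))\<^sup>2 + (norm (p - y))\<^sup>2"
    by simp
  moreover have "2 * \<gamma> * (g y + Gr y \<bullet> (p - y)) \<le> 2 * \<gamma> * g p"
    using tangent \<open>\<gamma> > 0\<close> by simp
  ultimately show ?thesis
    using prox_step_toward_stationary_point[OF convex grad \<open>\<gamma> > 0\<close>, of x xs]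
    by (simp add: p_def inner_diff_left algebra_simps)
qed

fun running_argmin :: "('a \<Rightarrow> real) \<Rightarrow> (nat \<Rightarrow> 'a) \<Rightarrow> nat \<Rightarrow> 'a" where
  "running_argmin \<phi> d 0 = d 0"
| "running_argmin \<phi> d (Suc n) =
     (if \<phi> (d (Suc n)) < \<phi> (running_argmin \<phi> d n) then d (Suc n) else running_argmin \<phi> d n)"

lemma running_argmin_le: "i \<le> n \<Longrightarrow> \<phi> (running_argmin \<phi> d n) \<le> \<phi> (d i)"
  by (induction n) (auto simp: le_Suc_eq)

lemma dense_sequence_exists:
  obtains d :: "nat \<Rightarrow> 'a::{second_countable_topology, perfect_space}"
  where "\<And>X. open X \<Longrightarrow> X \<noteq> {} \<Longrightarrow> \<exists>i. d i \<in> X"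
proof -
  obtain Ds :: "'a set" where Ds: "countable Ds" "\<And>X. open X \<Longrightarrow> X \<noteq> {} \<Longrightarrow> \<exists>d\<in>Ds. d \<in> X"
    using countable_dense_exists by blast
  have "Ds \<noteq> {}"
    using Ds(2)[of UNIV] by auto
  show ?thesis
  proof (rule that[of "from_nat_into Ds"])
    fix X :: "'a set" assume "open X" "X \<noteq> {}"
    then obtain x where "x \<in> Ds" "x \<in> X"
      using Ds(2) by blast
    with from_nat_into_surj[OF Ds(1)] show "\<exists>i. from_nat_into Ds i \<in> X"
      by blast
  qed
qed

lemma running_argmin_tendsto:
  fixes \<phi> :: "'a::real_normed_vector \<Rightarrow> real"
  assumes "continuous_on UNIV \<phi>"
    and dense: "\<And>X. open X \<Longrightarrow> X \<noteq> {} \<Longrightarrow> \<exists>i. d i \<in> X"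
    and quadratic_growth: "\<And>w. \<phi> z + c * (norm (w - z))\<^sup>2 \<le> \<phi> w" and "c > 0"
  shows "running_argmin \<phi> d \<longlonglongrightarrow> z"
proof (rule LIMSEQ_I)
  fix r :: real assume "r > 0"
  have "open {w. \<phi> w < \<phi> z + c * r\<^sup>2}"
    using assms(1) by (intro open_Collect_less) (auto intro: continuous_intros)
  moreover have "z \<in> {w. \<phi> w < \<phi> z + c * r\<^sup>2}"
    using \<open>r > 0\<close> \<open>c > 0\<close> by simp
  ultimately obtain i where i: "\<phi> (d i) < \<phi> z + c * r\<^sup>2"
    using dense by blast
  have "norm (running_argmin \<phi> d n - z) < r" if "i \<le> n" for n
  proof -
    have "c * (norm (running_argmin \<phi> d n - z))\<^sup>2 < c * r\<^sup>2"
      using quadratic_growth[of "running_argmin \<phi> d n"] running_argmin_le[OF that, of \<phi> d] i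
      by linarith
    then show ?thesis
      using \<open>r > 0\<close> \<open>c > 0\<close> by (simp add: power_less_imp_less_base)
  qed
  then show "\<exists>n0. \<forall>n\<ge>n0. norm (running_argmin \<phi> d n - z) < r"
    by blast
qed

text \<open>Since prox_step is defined by THE, its joint measurability is obtained by writing it as the
  limit of running minima of the proximal objective over a countable dense sequence; the quadratic
  growth from the three-point inequality makes these minima converge.\<close>
lemma prox_step_measurable:
  fixes F :: "'b \<Rightarrow> 'a::euclidean_space \<Rightarrow> real" and G :: "'b \<Rightarrow> 'a \<Rightarrow> 'a"
  assumes F_meas: "(\<lambda>(\<xi>, x). F \<xi> x) \<in> borel_measurable (M \<Otimes>\<^sub>M borel)"
    and convex: "\<And>\<xi>. convex_on UNIV (F \<xi>)"
    and grad: "\<And>\<xi> y. (F \<xi> has_derivative (\<lambda>h. G \<xi> y \<bullet> h)) (at y)"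
    and "\<gamma> > 0"
  shows "(\<lambda>(\<xi>, x). prox_step \<gamma> (F \<xi>) x) \<in> borel_measurable (M \<Otimes>\<^sub>M borel)"
proof -
  obtain d :: "nat \<Rightarrow> 'a" where dense: "\<And>X. open X \<Longrightarrow> X \<noteq> {} \<Longrightarrow> \<exists>i. d i \<in> X"
    using dense_sequence_exists by blast
  define \<Phi> where "\<Phi> p w = F (fst p) w + (norm (w - snd p))\<^sup>2 / (2 * \<gamma>)" for p :: "'b \<times> 'a" and w
  have \<Phi>_meas: "(\<lambda>p. \<Phi> p (h p)) \<in> borel_measurable (M \<Otimes>\<^sub>M borel)"
    if [measurable]: "h \<in> borel_measurable (M \<Otimes>\<^sub>M borel)" for h
  proof -
    have "(\<lambda>p. (fst p, h p)) \<in> measurable (M \<Otimes>\<^sub>M borel) (M \<Otimes>\<^sub>M borel)"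
      by measurable
    from measurable_compose[OF this F_meas]
    have [measurable]: "(\<lambda>p. F (fst p) (h p)) \<in> borel_measurable (M \<Otimes>\<^sub>M borel)"
      by simp
    show ?thesis
      unfolding \<Phi>_def by measurable
  qed
  have "(\<lambda>p. running_argmin (\<Phi> p) d n) \<in> borel_measurable (M \<Otimes>\<^sub>M borel)" for n
  proof (induction n)
    case (Suc n)
    note [measurable] = Suc \<Phi>_meas[OF Suc] \<Phi>_meas[of "\<lambda>_. d (Suc n)"]
    show ?case by simp
  qed simp
  moreover have "(\<lambda>n. running_argmin (\<Phi> p) d n) \<longlonglongrightarrow> prox_step \<gamma> (F (fst p)) (snd p)" for p
  proof (rule running_argmin_tendsto[OF _ dense])
    have "continuous_on UNIV (F (fst p))"
      using grad by (intro continuous_at_imp_continuous_on) (auto intro: has_derivative_continuous)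
    then show "continuous_on UNIV (\<Phi> p)"
      unfolding \<Phi>_def using \<open>\<gamma> > 0\<close> by (intro continuous_intros) auto
    show "\<Phi> p (prox_step \<gamma> (F (fst p)) (snd p)) + 1 / (2 * \<gamma>) * (norm (w - prox_step \<gamma> (F (fst p)) (snd p)))\<^sup>2
          \<le> \<Phi> p w" for w
      using prox_step_three_point[OF convex grad \<open>\<gamma> > 0\<close>] by (simp add: \<Phi>_def)
    show "0 < 1 / (2 * \<gamma>)"
      using \<open>\<gamma> > 0\<close> by simp
  qed
  ultimately have "(\<lambda>p. prox_step \<gamma> (F (fst p)) (snd p)) \<in> borel_measurable (M \<Otimes>\<^sub>M borel)"
    by (rule borel_measurable_LIMSEQ_metric)
  then show ?thesis
    by (simp add: case_prod_beta')
qed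

lemma (in prob_space) integral_power2_norm_diff:
  fixes z :: "'a \<Rightarrow> 'b::euclidean_space"
  assumes z: "integrable M z" and z2: "integrable M (\<lambda>\<xi>. (norm (z \<xi>))\<^sup>2)"
  shows integrable_power2_norm_diff: "integrable M (\<lambda>\<xi>. (norm (z \<xi> - q))\<^sup>2)"
    and "(\<integral>\<xi>. (norm (z \<xi> - q))\<^sup>2 \<partial>M) = (\<integral>\<xi>. (norm (z \<xi>))\<^sup>2 \<partial>M) - 2 * (expectation z \<bullet> q) + (norm q)\<^sup>2"
proof -
  have expand: "(norm (z \<xi> - q))\<^sup>2 = (norm (z \<xi>))\<^sup>2 - 2 * (z \<xi> \<bullet> q) + (norm q)\<^sup>2" for \<xi>
    using power2_norm_add[of "z \<xi>" "- q"] by simp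
  have "integrable M (\<lambda>\<xi>. (norm (z \<xi>))\<^sup>2 - 2 * (z \<xi> \<bullet> q) + (norm q)\<^sup>2)"
    using z z2 by auto
  then show "integrable M (\<lambda>\<xi>. (norm (z \<xi> - q))\<^sup>2)"
    by (simp only: expand)
  show "(\<integral>\<xi>. (norm (z \<xi> - q))\<^sup>2 \<partial>M) = (\<integral>\<xi>. (norm (z \<xi>))\<^sup>2 \<partial>M) - 2 * (expectation z \<bullet> q) + (norm q)\<^sup>2"
    using z z2 by (simp add: expand prob_space)
qed

lemma (in prob_space) integral_power2_norm_diff_mean:
  fixes z :: "'a \<Rightarrow> 'b::euclidean_space"
  assumes "integrable M z" and "integrable M (\<lambda>\<xi>. (norm (z \<xi>))\<^sup>2)"
  shows "(\<integral>\<xi>. (norm (z \<xi> - q))\<^sup>2 \<partial>M)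
           = (\<integral>\<xi>. (norm (z \<xi> - expectation z))\<^sup>2 \<partial>M) + (norm (expectation z - q))\<^sup>2"
proof -
  let ?m = "expectation z"
  have "(norm (?m - q))\<^sup>2 = ?m \<bullet> ?m - 2 * (?m \<bullet> q) + (norm q)\<^sup>2"
    using power2_norm_add[of ?m "- q"] by (simp add: power2_norm_eq_inner)
  moreover have "(norm (?m - ?m))\<^sup>2 = 0"
    by simp
  ultimately show ?thesis
    using integral_power2_norm_diff(2)[OF assms, of q] integral_power2_norm_diff(2)[OF assms, of ?m]
    by (simp add: power2_norm_eq_inner)
qed

lemma (in prob_space) nn_integral_PiM_seq_split:
  assumes [measurable]: "f \<in> borel_measurable (PiM UNIV (\<lambda>_::nat. M))"
  shows "(\<integral>\<^sup>+\<omega>. f \<omega> \<partial>PiM UNIV (\<lambda>_. M))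
           = (\<integral>\<^sup>+\<xi>. (\<integral>\<^sup>+\<omega>. f (case_nat \<xi> \<omega>) \<partial>PiM UNIV (\<lambda>_. M)) \<partial>M)"
proof -
  interpret S: sequence_space M ..
  have "(\<integral>\<^sup>+\<omega>. f \<omega> \<partial>PiM UNIV (\<lambda>_. M)) = (\<integral>\<^sup>+p. f (case_nat (fst p) (snd p)) \<partial>(M \<Otimes>\<^sub>M S.S))"
    by (subst S.PiM_iter[symmetric]) (simp add: nn_integral_distr split_beta')
  also have "\<dots> = (\<integral>\<^sup>+\<xi>. (\<integral>\<^sup>+\<omega>. f (case_nat \<xi> \<omega>) \<partial>S.S) \<partial>M)"
  proof -
    have "(\<lambda>p. f (case_nat (fst p) (snd p))) \<in> borel_measurable (M \<Otimes>\<^sub>M S.S)"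
      by measurable
    from S.nn_integral_fst[OF this] show ?thesis
      by simp
  qed
  finally show ?thesis .
qed

lemma (in prob_space) AE_PiM_all_components:
  assumes "AE \<xi> in M. P \<xi>"
  shows "AE \<omega> in PiM UNIV (\<lambda>_::nat. M). \<forall>i. P (\<omega> i)"
proof -
  interpret sequence_space M ..
  show ?thesis
    unfolding AE_all_countable using assms by (intro allI AE_component) simp_all
qed

lemma integral_if_AE_in:
  fixes f :: "'a \<Rightarrow> 'b::{banach, second_countable_topology}"
  assumes "S \<in> sets M" and "AE \<xi> in M. \<xi> \<in> S" and [measurable]: "f \<in> borel_measurable M"
  shows "(\<integral>\<xi>. (if \<xi> \<in> S then f \<xi> else 0) \<partial>M) = integral\<^sup>L M f"
    and "integrable M (\<lambda>\<xi>. if \<xi> \<in> S then f \<xi> else 0) \<longleftrightarrow> integrable M f"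
proof -
  have [measurable]: "S \<in> sets M"
    by (fact assms(1))
  have "AE \<xi> in M. (if \<xi> \<in> S then f \<xi> else 0) = f \<xi>"
    using assms(2) by (auto elim: eventually_mono)
  moreover have restricted: "(\<lambda>\<xi>. if \<xi> \<in> S then f \<xi> else 0) \<in> borel_measurable M"
    by measurable
  ultimately show "(\<integral>\<xi>. (if \<xi> \<in> S then f \<xi> else 0) \<partial>M) = integral\<^sup>L M f"
    and "integrable M (\<lambda>\<xi>. if \<xi> \<in> S then f \<xi> else 0) \<longleftrightarrow> integrable M f"
    by (simp_all add: integral_cong_AE integrable_cong_AE)
qed

lemma sppm_Suc_shift:
  "sppm \<gamma> F x \<omega> (Suc k) = sppm \<gamma> F (prox_step \<gamma> (F (\<omega> 0)) x) (\<lambda>n. \<omega> (Suc n)) k"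
  by (induction k) auto

locale sppm_setting = prob_space D
  for D :: "'b measure" +
  fixes F :: "'b \<Rightarrow> 'a::euclidean_space \<Rightarrow> real" and G :: "'b \<Rightarrow> 'a \<Rightarrow> 'a"
    and \<mu> \<delta> \<gamma> :: real and xs :: 'a
  assumes F_meas: "(\<lambda>(\<xi>, x). F \<xi> x) \<in> borel_measurable (D \<Otimes>\<^sub>M borel)"
    and F_int: "\<And>x. integrable D (\<lambda>\<xi>. F \<xi> x)"
    and G_int: "\<And>x. integrable D (\<lambda>\<xi>. G \<xi> x)"
    and convex: "\<And>\<xi>. convex_on UNIV (F \<xi>)"
    and grad: "\<And>\<xi> y. (F \<xi> has_derivative (\<lambda>h. G \<xi> y \<bullet> h)) (at y)"
    and strongly_convex: "\<And>x y. (\<integral>\<xi>. F \<xi> x \<partial>D) \<ge> (\<integral>\<xi>. F \<xi> y \<partial>D) + (\<integral>\<xi>. G \<xi> y \<partial>D) \<bullet> (x - y)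
                                   + \<mu> / 2 * (norm (x - y))\<^sup>2"
    and interpolation: "\<And>\<xi>. G \<xi> xs = 0"
    and star_similarity: "\<And>x. (\<integral>\<^sup>+ \<xi>. ennreal ((norm (G \<xi> x - (\<integral>\<zeta>. G \<zeta> x \<partial>D) - G \<xi> xs))\<^sup>2) \<partial>D)
                                \<le> ennreal (\<delta>\<^sup>2 * (norm (x - xs))\<^sup>2)"
    and \<delta>_pos: "\<delta> > 0" and \<gamma>_pos: "\<gamma> > 0" and \<gamma>_le: "\<gamma> \<le> \<mu> / (2 * \<delta>\<^sup>2)"
begin

lemma \<mu>_pos: "\<mu> > 0"
  using \<gamma>_pos \<gamma>_le \<delta>_pos by (smt (verit) divide_nonpos_pos zero_less_power)

lemma measurable_G [measurable]: "(\<lambda>\<xi>. G \<xi> x) \<in> borel_measurable D"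
  using G_int by auto

lemma measurable_prox_step [measurable]:
  "(\<lambda>p. prox_step \<gamma> (F (fst p)) (snd p)) \<in> borel_measurable (D \<Otimes>\<^sub>M borel)"
  using prox_step_measurable[OF F_meas convex grad \<gamma>_pos] by (simp add: case_prod_beta')

lemma integrable_gradient_noise: "integrable D (\<lambda>\<xi>. (norm (G \<xi> y - (\<integral>\<zeta>. G \<zeta> y \<partial>D)))\<^sup>2)"
  and integral_gradient_noise_le:
    "(\<integral>\<xi>. (norm (G \<xi> y - (\<integral>\<zeta>. G \<zeta> y \<partial>D)))\<^sup>2 \<partial>D) \<le> \<delta>\<^sup>2 * (norm (y - xs))\<^sup>2"
proof -
  have noise: "(\<integral>\<^sup>+\<xi>. ennreal ((norm (G \<xi> y - (\<integral>\<zeta>. G \<zeta> y \<partial>D)))\<^sup>2) \<partial>D) \<le> ennreal (\<delta>\<^sup>2 * (norm (y - xs))\<^sup>2)"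
    using star_similarity[of y] by (simp add: interpolation)
  then show integrable: "integrable D (\<lambda>\<xi>. (norm (G \<xi> y - (\<integral>\<zeta>. G \<zeta> y \<partial>D)))\<^sup>2)"
    by (intro integrableI_nonneg) (auto simp: top.not_eq_extremum le_less_trans[OF _ ennreal_less_top])
  have "ennreal (\<integral>\<xi>. (norm (G \<xi> y - (\<integral>\<zeta>. G \<zeta> y \<partial>D)))\<^sup>2 \<partial>D)
        = (\<integral>\<^sup>+\<xi>. ennreal ((norm (G \<xi> y - (\<integral>\<zeta>. G \<zeta> y \<partial>D)))\<^sup>2) \<partial>D)"
    using integrable by (intro nn_integral_eq_integral[symmetric]) auto
  with noise have "ennreal (\<integral>\<xi>. (norm (G \<xi> y - (\<integral>\<zeta>. G \<zeta> y \<partial>D)))\<^sup>2 \<partial>D)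
                   \<le> ennreal (\<delta>\<^sup>2 * (norm (y - xs))\<^sup>2)"
    by simp
  then show "(\<integral>\<xi>. (norm (G \<xi> y - (\<integral>\<zeta>. G \<zeta> y \<partial>D)))\<^sup>2 \<partial>D) \<le> \<delta>\<^sup>2 * (norm (y - xs))\<^sup>2"
    by (simp add: ennreal_le_iff)
qed

lemma measurable_prox_step_at [measurable]: "(\<lambda>\<xi>. prox_step \<gamma> (F \<xi>) x) \<in> borel_measurable D"
  using measurable_compose[OF _ measurable_prox_step, of "\<lambda>\<xi>. (\<xi>, x)"] by simp

lemma prox_step_dist_stationary_le: "norm (prox_step \<gamma> (F \<xi>) x - xs) \<le> norm (x - xs)"
proof (rule power2_le_imp_le)
  show "(norm (prox_step \<gamma> (F \<xi>) x - xs))\<^sup>2 \<le> (norm (x - xs))\<^sup>2"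
    using prox_step_dist_le[OF convex grad \<gamma>_pos interpolation, of \<xi> x]
      zero_le_power2[of "norm (prox_step \<gamma> (F \<xi>) x - x)"] by linarith
qed simp

lemma integrable_prox_step: "integrable D (\<lambda>\<xi>. prox_step \<gamma> (F \<xi>) x)"
  and integrable_power2_norm_prox_step: "integrable D (\<lambda>\<xi>. (norm (prox_step \<gamma> (F \<xi>) x))\<^sup>2)"
proof -
  have bound: "norm (prox_step \<gamma> (F \<xi>) x) \<le> norm xs + norm (x - xs)" for \<xi>
    using prox_step_dist_stationary_le[of \<xi> x] norm_triangle_sub[of "prox_step \<gamma> (F \<xi>) x" xs] by simp
  show "integrable D (\<lambda>\<xi>. prox_step \<gamma> (F \<xi>) x)"
    using bound by (intro integrable_const_bound[of _ "norm xs + norm (x - xs)"]) auto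
  show "integrable D (\<lambda>\<xi>. (norm (prox_step \<gamma> (F \<xi>) x))\<^sup>2)"
    using bound by (intro integrable_const_bound[of _ "(norm xs + norm (x - xs))\<^sup>2"]) (auto intro: power_mono)
qed

lemma expected_prox_step_descent:
  fixes x :: 'a
  defines "z \<equiv> \<lambda>\<xi>. prox_step \<gamma> (F \<xi>) x" and "m \<equiv> \<integral>\<xi>. prox_step \<gamma> (F \<xi>) x \<partial>D"
  shows "(\<integral>\<xi>. (norm (z \<xi> - x))\<^sup>2 \<partial>D) + (\<integral>\<xi>. (norm (z \<xi> - xs))\<^sup>2 \<partial>D)
           + 2 * \<gamma> * ((\<integral>\<xi>. F \<xi> m \<partial>D) - (\<integral>\<xi>. F \<xi> xs \<partial>D))
         \<le> (norm (x - xs))\<^sup>2 + (\<integral>\<xi>. (norm (z \<xi> - m))\<^sup>2 \<partial>D) + \<gamma> * \<mu> / 2 * (norm (m - xs))\<^sup>2"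
proof -
  define v where "v = (\<integral>\<xi>. G \<xi> m \<partial>D)"
  define c where "c = 2 * \<delta>\<^sup>2 / \<mu>"
  have "c > 0" and "\<gamma> * c \<le> 1" and c_noise: "\<gamma> / c * \<delta>\<^sup>2 = \<gamma> * \<mu> / 2"
    using \<mu>_pos \<delta>_pos \<gamma>_le by (auto simp: c_def field_simps)
  have z_int: "integrable D z" and z_sq_int: "integrable D (\<lambda>\<xi>. (norm (z \<xi> - q))\<^sup>2)" for q
    unfolding z_def by (rule integrable_prox_step integrable_power2_norm_diff
        integrable_prox_step integrable_power2_norm_prox_step)+
  have pointwise: "(norm (z \<xi> - x))\<^sup>2 + (norm (z \<xi> - xs))\<^sup>2 + 2 * \<gamma> * (F \<xi> m - F \<xi> xs) + 2 * \<gamma> * (v \<bullet> (z \<xi> - m))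
        \<le> (norm (x - xs))\<^sup>2 + (norm (z \<xi> - m))\<^sup>2 + \<gamma> / c * (norm (G \<xi> m - v))\<^sup>2" for \<xi>
    unfolding z_def by (rule prox_step_linearized_ineq[OF convex grad \<gamma>_pos \<open>c > 0\<close> \<open>\<gamma> * c \<le> 1\<close>])
  have centered: "(\<integral>\<xi>. v \<bullet> (z \<xi> - m) \<partial>D) = 0"
    using z_int by (simp add: m_def z_def prob_space)
  have "(\<integral>\<xi>. (norm (z \<xi> - x))\<^sup>2 \<partial>D) + (\<integral>\<xi>. (norm (z \<xi> - xs))\<^sup>2 \<partial>D)
          + 2 * \<gamma> * ((\<integral>\<xi>. F \<xi> m \<partial>D) - (\<integral>\<xi>. F \<xi> xs \<partial>D))
        = (\<integral>\<xi>. (norm (z \<xi> - x))\<^sup>2 + (norm (z \<xi> - xs))\<^sup>2 + 2 * \<gamma> * (F \<xi> m - F \<xi> xs)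
             + 2 * \<gamma> * (v \<bullet> (z \<xi> - m)) \<partial>D)"
    using z_sq_int F_int z_int centered by simp
  also have "\<dots> \<le> (\<integral>\<xi>. (norm (x - xs))\<^sup>2 + (norm (z \<xi> - m))\<^sup>2 + \<gamma> / c * (norm (G \<xi> m - v))\<^sup>2 \<partial>D)"
    using pointwise integrable_gradient_noise[of m] unfolding v_def
    by (intro integral_mono Bochner_Integration.integrable_add Bochner_Integration.integrable_diff
        integrable_mult_right integrable_inner_right z_sq_int F_int z_int integrable_const)
  also have "\<dots> = (norm (x - xs))\<^sup>2 + (\<integral>\<xi>. (norm (z \<xi> - m))\<^sup>2 \<partial>D)
                   + \<gamma> / c * (\<integral>\<xi>. (norm (G \<xi> m - v))\<^sup>2 \<partial>D)"
    using z_sq_int integrable_gradient_noise[of m] by (simp add: v_def prob_space)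
  also have "\<gamma> / c * (\<integral>\<xi>. (norm (G \<xi> m - v))\<^sup>2 \<partial>D) \<le> \<gamma> / c * (\<delta>\<^sup>2 * (norm (m - xs))\<^sup>2)"
    using integral_gradient_noise_le[of m] \<gamma>_pos \<open>c > 0\<close>
    by (intro mult_left_mono) (simp_all add: v_def)
  also have "\<gamma> / c * (\<delta>\<^sup>2 * (norm (m - xs))\<^sup>2) = \<gamma> * \<mu> / 2 * (norm (m - xs))\<^sup>2"
    by (simp only: mult.assoc[symmetric] c_noise)
  finally show ?thesis
    by simp
qed

lemma mean_prox_step_bound:
  fixes x :: 'a
  defines "z \<equiv> \<lambda>\<xi>. prox_step \<gamma> (F \<xi>) x" and "m \<equiv> \<integral>\<xi>. prox_step \<gamma> (F \<xi>) x \<partial>D"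
  shows "(1 + \<gamma> * \<mu> / 2) * (norm (m - xs))\<^sup>2 + (norm (x - m))\<^sup>2 + (\<integral>\<xi>. (norm (z \<xi> - m))\<^sup>2 \<partial>D)
           \<le> (norm (x - xs))\<^sup>2"
proof -
  have "\<mu> / 2 * (norm (m - xs))\<^sup>2 \<le> (\<integral>\<xi>. F \<xi> m \<partial>D) - (\<integral>\<xi>. F \<xi> xs \<partial>D)"
    using strongly_convex[where x = m and y = xs] by (simp add: interpolation)
  then have "2 * \<gamma> * (\<mu> / 2 * (norm (m - xs))\<^sup>2)
             \<le> 2 * \<gamma> * ((\<integral>\<xi>. F \<xi> m \<partial>D) - (\<integral>\<xi>. F \<xi> xs \<partial>D))"
    using \<gamma>_pos by (intro mult_left_mono) auto
  moreover have "2 * \<gamma> * (\<mu> / 2 * (norm (m - xs))\<^sup>2) = 2 * (\<gamma> * \<mu> / 2 * (norm (m - xs))\<^sup>2)"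
    by simp
  moreover have bias_variance: "(\<integral>\<xi>. (norm (z \<xi> - q))\<^sup>2 \<partial>D) = (\<integral>\<xi>. (norm (z \<xi> - m))\<^sup>2 \<partial>D) + (norm (m - q))\<^sup>2" for q
    unfolding m_def z_def
    by (rule integral_power2_norm_diff_mean[OF integrable_prox_step integrable_power2_norm_prox_step])
  moreover have "(1 + \<gamma> * \<mu> / 2) * (norm (m - xs))\<^sup>2 = (norm (m - xs))\<^sup>2 + \<gamma> * \<mu> / 2 * (norm (m - xs))\<^sup>2"
    by (simp add: distrib_right)
  moreover have "(norm (x - m))\<^sup>2 = (norm (m - x))\<^sup>2"
    by (simp add: norm_minus_commute)
  ultimately show ?thesis
    using expected_prox_step_descent[of x] bias_variance[of x] bias_variance[of xs]
    unfolding z_def m_def by linarith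
qed

lemma prox_step_expected_contraction:
  "(\<integral>\<^sup>+\<xi>. ennreal ((norm (prox_step \<gamma> (F \<xi>) x - xs))\<^sup>2) \<partial>D)
     \<le> ennreal ((norm (x - xs))\<^sup>2 / (1 + \<gamma> * \<mu> / 2))"
proof -
  define m where "m = (\<integral>\<xi>. prox_step \<gamma> (F \<xi>) x \<partial>D)"
  define V where "V = (\<integral>\<xi>. (norm (prox_step \<gamma> (F \<xi>) x - m))\<^sup>2 \<partial>D)"
  have "(1 + \<gamma> * \<mu> / 2) * (V + (norm (m - xs))\<^sup>2) \<le> (norm ((x - m) + (m - xs)))\<^sup>2"
    using mean_prox_step_bound[of x] \<gamma>_pos \<mu>_pos
    by (intro contraction_from_power2_norm_add_bound) (auto simp: m_def V_def algebra_simps)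
  moreover have "(\<integral>\<xi>. (norm (prox_step \<gamma> (F \<xi>) x - xs))\<^sup>2 \<partial>D) = V + (norm (m - xs))\<^sup>2"
    unfolding V_def m_def
    by (rule integral_power2_norm_diff_mean[OF integrable_prox_step integrable_power2_norm_prox_step])
  ultimately have "(\<integral>\<xi>. (norm (prox_step \<gamma> (F \<xi>) x - xs))\<^sup>2 \<partial>D) \<le> (norm (x - xs))\<^sup>2 / (1 + \<gamma> * \<mu> / 2)"
    using \<gamma>_pos \<mu>_pos by (subst pos_le_divide_eq) (simp_all add: mult.commute add_pos_pos)
  moreover have "(\<integral>\<^sup>+\<xi>. ennreal ((norm (prox_step \<gamma> (F \<xi>) x - xs))\<^sup>2) \<partial>D)
                 = ennreal (\<integral>\<xi>. (norm (prox_step \<gamma> (F \<xi>) x - xs))\<^sup>2 \<partial>D)"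
    using integrable_power2_norm_diff[OF integrable_prox_step integrable_power2_norm_prox_step]
    by (intro nn_integral_eq_integral) auto
  ultimately show ?thesis
    by (simp add: ennreal_leI)
qed

lemma measurable_sppm [measurable]:
  "(\<lambda>\<omega>. sppm \<gamma> F x \<omega> n) \<in> borel_measurable (PiM UNIV (\<lambda>_::nat. D))"
proof (induction n)
  case (Suc n)
  have "(\<lambda>\<omega>. (\<omega> n, sppm \<gamma> F x \<omega> n)) \<in> measurable (PiM UNIV (\<lambda>_. D)) (D \<Otimes>\<^sub>M borel)"
    using Suc by measurable
  from measurable_compose[OF this measurable_prox_step] show ?case
    by simp
qed simp

lemma sppm_expected_contraction:
  "(\<integral>\<^sup>+\<omega>. ennreal ((norm (sppm \<gamma> F x \<omega> n - xs))\<^sup>2) \<partial>PiM UNIV (\<lambda>_. D))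
     \<le> ennreal ((1 / (1 + \<gamma> * \<mu> / 2)) ^ n * (norm (x - xs))\<^sup>2)"
proof (induction n arbitrary: x)
  case 0
  show ?case
    by (simp add: prob_space_PiM[OF prob_space_axioms] prob_space.emeasure_space_1)
next
  case (Suc n)
  let ?S = "PiM UNIV (\<lambda>_::nat. D)" and ?\<rho> = "1 / (1 + \<gamma> * \<mu> / 2)"
  have "?\<rho> \<ge> 0"
    using \<gamma>_pos \<mu>_pos by simp
  have "(\<integral>\<^sup>+\<omega>. ennreal ((norm (sppm \<gamma> F x \<omega> (Suc n) - xs))\<^sup>2) \<partial>?S)
      = (\<integral>\<^sup>+\<xi>. (\<integral>\<^sup>+\<omega>. ennreal ((norm (sppm \<gamma> F (prox_step \<gamma> (F \<xi>) x) \<omega> n - xs))\<^sup>2) \<partial>?S) \<partial>D)"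
  proof -
    have "(\<lambda>\<omega>. ennreal ((norm (sppm \<gamma> F x \<omega> (Suc n) - xs))\<^sup>2)) \<in> borel_measurable ?S"
      by measurable
    from nn_integral_PiM_seq_split[OF this] show ?thesis
      by (simp only: sppm_Suc_shift) simp
  qed
  also have "\<dots> \<le> (\<integral>\<^sup>+\<xi>. ennreal (?\<rho> ^ n) * ennreal ((norm (prox_step \<gamma> (F \<xi>) x - xs))\<^sup>2) \<partial>D)"
    using Suc.IH \<open>?\<rho> \<ge> 0\<close> by (intro nn_integral_mono) (simp add: ennreal_mult[symmetric])
  also have "\<dots> = ennreal (?\<rho> ^ n) * (\<integral>\<^sup>+\<xi>. ennreal ((norm (prox_step \<gamma> (F \<xi>) x - xs))\<^sup>2) \<partial>D)"
    by (rule nn_integral_cmult) measurable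
  also have "\<dots> \<le> ennreal (?\<rho> ^ n) * ennreal ((norm (x - xs))\<^sup>2 / (1 + \<gamma> * \<mu> / 2))"
    by (intro mult_left_mono prox_step_expected_contraction) simp
  also have "\<dots> = ennreal (?\<rho> ^ Suc n * (norm (x - xs))\<^sup>2)"
    using \<open>?\<rho> \<ge> 0\<close> by (simp add: ennreal_mult[symmetric] field_simps)
  finally show ?case .
qed

end

lemma sppm_setting_restrict:
  fixes F :: "'b \<Rightarrow> 'a::euclidean_space \<Rightarrow> real" and G :: "'b \<Rightarrow> 'a \<Rightarrow> 'a"
  assumes D: "prob_space D" and S: "S \<in> sets D" "AE \<xi> in D. \<xi> \<in> S"
    and good: "\<And>\<xi>. \<xi> \<in> S \<Longrightarrow> (\<forall>x. (F \<xi> has_derivative (\<lambda>h. G \<xi> x \<bullet> h)) (at x))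
                                  \<and> convex_on UNIV (F \<xi>) \<and> G \<xi> xs = 0"
    and F_meas: "(\<lambda>(\<xi>, x). F \<xi> x) \<in> borel_measurable (D \<Otimes>\<^sub>M borel)"
    and F_int: "\<And>x. integrable D (\<lambda>\<xi>. F \<xi> x)"
    and G_int: "\<And>x. integrable D (\<lambda>\<xi>. G \<xi> x)"
    and A3: "\<And>x y. (\<integral>\<xi>. F \<xi> x \<partial>D) \<ge> (\<integral>\<xi>. F \<xi> y \<partial>D) + (\<integral>\<xi>. G \<xi> y \<partial>D) \<bullet> (x - y)
                        + \<mu> / 2 * (norm (x - y))\<^sup>2"
    and SS: "\<And>x. (\<integral>\<^sup>+ \<xi>. ennreal ((norm (G \<xi> x - (\<integral>\<zeta>. G \<zeta> x \<partial>D) - G \<xi> xs))\<^sup>2) \<partial>D)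
                   \<le> ennreal (\<delta>\<^sup>2 * (norm (x - xs))\<^sup>2)"
    and "\<delta> > 0" "\<gamma> > 0" "\<gamma> \<le> \<mu> / (2 * \<delta>\<^sup>2)"
  shows "sppm_setting D (\<lambda>\<xi> x. if \<xi> \<in> S then F \<xi> x else 0) (\<lambda>\<xi> x. if \<xi> \<in> S then G \<xi> x else 0) \<mu> \<delta> \<gamma> xs"
proof -
  have [measurable]: "(\<lambda>\<xi>. F \<xi> x) \<in> borel_measurable D" "(\<lambda>\<xi>. G \<xi> x) \<in> borel_measurable D" for x
    using F_int G_int by auto
  note integral_eq = integral_if_AE_in(1)[OF S] and integrable_iff = integral_if_AE_in(2)[OF S]
  show ?thesis
  proof (intro sppm_setting.intro sppm_setting_axioms.intro D, goal_cases)
    case 1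
    have [measurable]: "(\<lambda>p. F (fst p) (snd p)) \<in> borel_measurable (D \<Otimes>\<^sub>M borel)"
      using F_meas by (simp add: case_prod_beta')
    have "(\<lambda>p. if fst p \<in> S then F (fst p) (snd p) else 0) \<in> borel_measurable (D \<Otimes>\<^sub>M borel)"
      using S(1) by measurable
    then show ?case
      by (simp add: case_prod_beta')
  next
    case (4 \<xi>)
    show ?case
      using good[of \<xi>] by (cases "\<xi> \<in> S") (simp_all add: convex_on_const)
  next
    case (5 \<xi> y)
    show ?case
      using good[of \<xi>] by auto
  next
    case (7 \<xi>)
    show ?case
      using good[of \<xi>] by auto
  next
    case (8 x)
    have "AE \<xi> in D. ennreal ((norm ((if \<xi> \<in> S then G \<xi> x else 0)
                 - (\<integral>\<zeta>. (if \<zeta> \<in> S then G \<zeta> x else 0) \<partial>D) - (if \<xi> \<in> S then G \<xi> xs else 0)))\<^sup>2)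
             = ennreal ((norm (G \<xi> x - (\<integral>\<zeta>. G \<zeta> x \<partial>D) - G \<xi> xs))\<^sup>2)"
      using S(2) by eventually_elim (simp add: integral_eq)
    from nn_integral_cong_AE[OF this] show ?case
      using SS[of x] by simp
  qed (use good F_int G_int A3 \<open>\<delta> > 0\<close> \<open>\<gamma> > 0\<close> \<open>\<gamma> \<le> \<mu> / (2 * \<delta>\<^sup>2)\<close> D in
       \<open>auto simp: integral_eq integrable_iff convex_on_const prob_space_def\<close>)
qed

lemma sppm_setting_null_modification:
  fixes F :: "'b \<Rightarrow> 'a::euclidean_space \<Rightarrow> real" and G :: "'b \<Rightarrow> 'a \<Rightarrow> 'a"
  assumes D: "prob_space D"
    and F_meas: "(\<lambda>(\<xi>, x). F \<xi> x) \<in> borel_measurable (D \<Otimes>\<^sub>M borel)"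
    and F_int: "\<And>x. integrable D (\<lambda>\<xi>. F \<xi> x)"
    and G_int: "\<And>x. integrable D (\<lambda>\<xi>. G \<xi> x)"
    and A1: "AE \<xi> in D. \<forall>x. (F \<xi> has_derivative (\<lambda>h. G \<xi> x \<bullet> h)) (at x)"
    and A2: "AE \<xi> in D. convex_on UNIV (F \<xi>)"
    and A3: "\<And>x y. (\<integral>\<xi>. F \<xi> x \<partial>D) \<ge> (\<integral>\<xi>. F \<xi> y \<partial>D) + (\<integral>\<xi>. G \<xi> y \<partial>D) \<bullet> (x - y)
                        + \<mu> / 2 * (norm (x - y))\<^sup>2"
    and A4: "AE \<xi> in D. G \<xi> xs = 0"
    and SS: "\<And>x. (\<integral>\<^sup>+ \<xi>. ennreal ((norm (G \<xi> x - (\<integral>\<zeta>. G \<zeta> x \<partial>D) - G \<xi> xs))\<^sup>2) \<partial>D)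
                   \<le> ennreal (\<delta>\<^sup>2 * (norm (x - xs))\<^sup>2)"
    and "\<delta> > 0" "\<gamma> > 0" "\<gamma> \<le> \<mu> / (2 * \<delta>\<^sup>2)"
  obtains F' G' where "sppm_setting D F' G' \<mu> \<delta> \<gamma> xs" and "AE \<xi> in D. F' \<xi> = F \<xi>"
proof -
  from A1 A2 A4 have "AE \<xi> in D. (\<forall>x. (F \<xi> has_derivative (\<lambda>h. G \<xi> x \<bullet> h)) (at x))
                                 \<and> convex_on UNIV (F \<xi>) \<and> G \<xi> xs = 0"
    by eventually_elim auto
  then obtain N where good: "\<And>\<xi>. \<xi> \<in> space D - N \<Longrightarrow> (\<forall>x. (F \<xi> has_derivative (\<lambda>h. G \<xi> x \<bullet> h)) (at x))
                                 \<and> convex_on UNIV (F \<xi>) \<and> G \<xi> xs = 0" and "N \<in> null_sets D"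
    by (rule AE_E3) blast
  have AE_good: "AE \<xi> in D. \<xi> \<in> space D - N"
    using AE_not_in[OF \<open>N \<in> null_sets D\<close>] by (auto elim: eventually_mono)
  show ?thesis
  proof (rule that)
    show "sppm_setting D (\<lambda>\<xi> x. if \<xi> \<in> space D - N then F \<xi> x else 0)
            (\<lambda>\<xi> x. if \<xi> \<in> space D - N then G \<xi> x else 0) \<mu> \<delta> \<gamma> xs"
      using \<open>N \<in> null_sets D\<close> AE_good \<open>\<delta> > 0\<close> \<open>\<gamma> > 0\<close> \<open>\<gamma> \<le> \<mu> / (2 * \<delta>\<^sup>2)\<close>
      by (intro sppm_setting_restrict[OF D _ _ good F_meas F_int G_int A3 SS]) auto
    show "AE \<xi> in D. (\<lambda>x. if \<xi> \<in> space D - N then F \<xi> x else 0) = F \<xi>"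
      using AE_good by (auto elim: eventually_mono)
  qed
qed

theorem theorem6p1:
  fixes D :: "'b measure"
    and F :: "'b \<Rightarrow> 'a::euclidean_space \<Rightarrow> real"
    and G :: "'b \<Rightarrow> 'a \<Rightarrow> 'a"
    and \<mu> \<delta> \<gamma> :: real and xs x0 :: 'a
  assumes D: "prob_space D"
    and F_meas: "(\<lambda>(\<xi>, x). F \<xi> x) \<in> borel_measurable (D \<Otimes>\<^sub>M borel)"
    and F_int: "\<And>x. integrable D (\<lambda>\<xi>. F \<xi> x)"
    and G_int: "\<And>x. integrable D (\<lambda>\<xi>. G \<xi> x)"
    and A1: "AE \<xi> in D. \<forall>x. (F \<xi> has_derivative (\<lambda>h. G \<xi> x \<bullet> h)) (at x)"
    and f_grad: "\<And>x. ((\<lambda>y. \<integral>\<xi>. F \<xi> y \<partial>D) has_derivative (\<lambda>h. (\<integral>\<xi>. G \<xi> x \<partial>D) \<bullet> h)) (at x)"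
    and A2: "AE \<xi> in D. convex_on UNIV (F \<xi>)"
    and A3: "\<And>x y. (\<integral>\<xi>. F \<xi> x \<partial>D) \<ge> (\<integral>\<xi>. F \<xi> y \<partial>D) + (\<integral>\<xi>. G \<xi> y \<partial>D) \<bullet> (x - y)
                        + \<mu> / 2 * (norm (x - y))\<^sup>2"
    and xs_min: "\<And>x. (\<integral>\<xi>. F \<xi> xs \<partial>D) \<le> (\<integral>\<xi>. F \<xi> x \<partial>D)"
    and A4: "AE \<xi> in D. G \<xi> xs = 0"
    and \<delta>_pos: "\<delta> > 0"
    and SS: "\<And>x. (\<integral>\<^sup>+ \<xi>. ennreal ((norm (G \<xi> x - (\<integral>\<zeta>. G \<zeta> x \<partial>D) - G \<xi> xs))\<^sup>2) \<partial>D)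
                   \<le> ennreal (\<delta>\<^sup>2 * (norm (x - xs))\<^sup>2)"
    and \<gamma>_pos: "\<gamma> > 0"
    and \<gamma>_le: "\<gamma> \<le> \<mu> / (2 * \<delta>\<^sup>2)"
  shows "\<forall>k. (\<integral>\<^sup>+ \<omega>. ennreal ((norm (sppm \<gamma> F x0 \<omega> k - xs))\<^sup>2) \<partial>(PiM UNIV (\<lambda>_. D)))
             \<le> ennreal ((1 - min (\<gamma> * \<mu> / 4) (1 / 2)) ^ k * (norm (x0 - xs))\<^sup>2)"
proof
  fix k
  obtain F' G' where setting: "sppm_setting D F' G' \<mu> \<delta> \<gamma> xs" and F'_AE: "AE \<xi> in D. F' \<xi> = F \<xi>"
    using sppm_setting_null_modification[OF D F_meas F_int G_int A1 A2 A3 A4 SS \<delta>_pos \<gamma>_pos \<gamma>_le] .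
  interpret sppm_setting D F' G' \<mu> \<delta> \<gamma> xs
    by (fact setting)
  have "AE \<omega> in PiM UNIV (\<lambda>_::nat. D). \<forall>i. F' (\<omega> i) = F (\<omega> i)"
    using F'_AE by (rule AE_PiM_all_components)
  then have "AE \<omega> in PiM UNIV (\<lambda>_. D). sppm \<gamma> F x0 \<omega> k = sppm \<gamma> F' x0 \<omega> k"
    by (rule eventually_mono) (induction k, simp_all)
  then have "(\<integral>\<^sup>+ \<omega>. ennreal ((norm (sppm \<gamma> F x0 \<omega> k - xs))\<^sup>2) \<partial>(PiM UNIV (\<lambda>_. D)))
             = (\<integral>\<^sup>+ \<omega>. ennreal ((norm (sppm \<gamma> F' x0 \<omega> k - xs))\<^sup>2) \<partial>(PiM UNIV (\<lambda>_. D)))"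
    by (intro nn_integral_cong_AE) (auto elim: eventually_mono)
  also have "\<dots> \<le> ennreal ((1 / (1 + \<gamma> * \<mu> / 2)) ^ k * (norm (x0 - xs))\<^sup>2)"
    by (rule sppm_expected_contraction)
  also have "\<dots> \<le> ennreal ((1 - min (\<gamma> * \<mu> / 4) (1 / 2)) ^ k * (norm (x0 - xs))\<^sup>2)"
    using one_div_one_plus_le[of "\<gamma> * \<mu> / 2"] \<gamma>_pos \<mu>_pos
    by (intro ennreal_leI mult_right_mono power_mono) auto
  finally show "(\<integral>\<^sup>+ \<omega>. ennreal ((norm (sppm \<gamma> F x0 \<omega> k - xs))\<^sup>2) \<partial>(PiM UNIV (\<lambda>_. D)))
             \<le> ennreal ((1 - min (\<gamma> * \<mu> / 4) (1 / 2)) ^ k * (norm (x0 - xs))\<^sup>2)" .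
qed

end
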